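(* Let $G=(V,E)$ be a connected graph with root $r\in V$, vertex probabilities $p_v\in[0,1]$ with $p_r=0$ and $\sum_{v\in V}p_v=1$, and edge lengths $\lambda_e>0$, and let $n=|V\setminus\{r\}|$. Let $\varepsilon>0$ and let $T^{\mathrm{s}}$ be the tree returned by the parametric search (described in the context) run with parameter $\varepsilon$. Then $$\rho^\star\le (1+\varepsilon)\Bigl(2-\tfrac1n\Bigr)\,\rho(T^{\mathrm{s}}),$$ where $\rho^\star=\max_{T\in\mathcal T(G)}\rho(T)$ is the maximum density.
   Context: Notation: for $V'\subseteq V$, $p(V')=\sum_{v\in V'}p_v$; for $E'\subseteq E$, $\lambda(E')=\sum_{e\in E'}\lambda_e$. $\mathcal T(G)$ is the set of subtrees of $G$ containing the root $r$; for $T\in\mathcal T(G)$, $p(T)=p(V[T])$ and $\lambda(T)=\lambda(E[T])$, and for $\lambda(T)>0$ the (search) density is $\rho(T)=p(T)/\lambda(T)$. The maximum density subtree problem asks for $T\in\mathcal T(G)$ maximizing $\rho(T)$. Prize-collecting Steiner tree (PCST) problem: given $G$, root $r$, edge lengths $(\ell_e)$ and vertex penalties $(p_v)$, find $T\in\mathcal T(G)$ minimizing $\ell(T)+p(V\setminus V[T])$. The GW algorithm is the Goemans–Williamson primal-dual algorithm for PCST; it returns a tree $T\in\mathcal T(G)$ satisfying $\ell(T)+(2-\frac1n)p(V\setminus V[T])\le(2-\frac1n)(\ell(T')+p(V\setminus V[T']))$ for every $T'\in\mathcal T(G)$. Parametric search with parameter $\varepsilon>0$: (1) take an arbitrary $T^{\mathrm{s}}\in\mathcal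 T(G)$ (with $\lambda(T^{\mathrm s})>0$), set $\alpha\gets(2-\frac1n)p(T^{\mathrm{s}})/\lambda(T^{\mathrm{s}})$ and $\beta\gets\max\{p_v/\lambda_{\{v,w\}}:\{v,w\}\in E\}$; (2) while $\beta>(1+\varepsilon)\alpha$: set $\rho\gets(\alpha+\beta)/2$; let $T$ be the tree returned by the GW algorithm on $G$ with edge lengths $(\rho\lambda_e)_{e\in E}$ and penalties $(p_v)_{v\in V}$; if $(2-\frac1n)p(T)\le\rho\lambda(T)$ set $\beta\gets\rho$, otherwise set $\alpha\gets(2-\frac1n)\rho(T)$ and $T^{\mathrm{s}}\gets T$; (3) return $T^{\mathrm{s}}$. *)

theory Defs
  imports Complex_Main
begin

definition simple_graph :: "'a set \<Rightarrow> 'a set set \<Rightarrow> bool" where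
  "simple_graph V E \<longleftrightarrow> finite V \<and>
     (\<forall>e\<in>E. \<exists>u v. e = {u, v} \<and> u \<noteq> v \<and> u \<in> V \<and> v \<in> V)"

definition adj_rel :: "'a set set \<Rightarrow> ('a \<times> 'a) set" where
  "adj_rel E = {(x, y). {x, y} \<in> E}"

definition connected_graph :: "'a set \<Rightarrow> 'a set set \<Rightarrow> bool" where
  "connected_graph V E \<longleftrightarrow> simple_graph V E \<and> V \<noteq> {} \<and>
     (\<forall>u\<in>V. \<forall>v\<in>V. (u, v) \<in> (adj_rel E)\<^sup>*)"

definition is_tree :: "'a set \<Rightarrow> 'a set set \<Rightarrow> bool" where
  "is_tree VT ET \<longleftrightarrow> connected_graph VT ET \<and> card ET = card VT - 1"

definition rooted_subtrees :: "'a set \<Rightarrow> 'a set set \<Rightarrow> 'a \<Rightarrow> ('a set \<times> 'a set set) set" where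
  "rooted_subtrees V E r = {(VT, ET). VT \<subseteq> V \<and> ET \<subseteq> E \<and> r \<in> VT \<and> is_tree VT ET}"

definition tp :: "('a \<Rightarrow> real) \<Rightarrow> ('a set \<times> 'a set set) \<Rightarrow> real" where
  "tp p T = (\<Sum>v\<in>fst T. p v)"

definition tlen :: "('a set \<Rightarrow> real) \<Rightarrow> ('a set \<times> 'a set set) \<Rightarrow> real" where
  "tlen lam T = (\<Sum>e\<in>snd T. lam e)"

definition density :: "('a \<Rightarrow> real) \<Rightarrow> ('a set \<Rightarrow> real) \<Rightarrow> ('a set \<times> 'a set set) \<Rightarrow> real" where
  "density p lam T = tp p T / tlen lam T"

definition max_density :: "'a set \<Rightarrow> 'a set set \<Rightarrow> 'a \<Rightarrow> ('a \<Rightarrow> real) \<Rightarrow> ('a set \<Rightarrow> real) \<Rightarrow> real" where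
  "max_density V E r p lam =
     Max {density p lam T | T. T \<in> rooted_subtrees V E r \<and> tlen lam T > 0}"

text \<open>Guarantee of the GW algorithm, as an oracle \<open>gw\<close> mapping edge lengths to a
  rooted subtree (penalties p fixed), with \<open>c = 2 - 1/n\<close>.\<close>

definition gw_guarantee ::
  "'a set \<Rightarrow> 'a set set \<Rightarrow> 'a \<Rightarrow> ('a \<Rightarrow> real) \<Rightarrow> real \<Rightarrow>
   (('a set \<Rightarrow> real) \<Rightarrow> ('a set \<times> 'a set set)) \<Rightarrow> bool" where
  "gw_guarantee V E r p c gw \<longleftrightarrow>
     (\<forall>len. (\<forall>e\<in>E. len e > 0) \<longrightarrow>
        gw len \<in> rooted_subtrees V E r \<and>
        (\<forall>T'\<in>rooted_subtrees V E r.
           tlen len (gw len) + c * (\<Sum>v\<in>V - fst (gw len). p v)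
             \<le> c * (tlen len T' + (\<Sum>v\<in>V - fst T'. p v))))"

type_synonym 'a ps_state = "real \<times> real \<times> ('a set \<times> 'a set set)"

definition ps_init :: "'a set set \<Rightarrow> ('a \<Rightarrow> real) \<Rightarrow> ('a set \<Rightarrow> real) \<Rightarrow> real \<Rightarrow>
    ('a set \<times> 'a set set) \<Rightarrow> 'a ps_state" where
  "ps_init E p lam c T0 =
     (c * tp p T0 / tlen lam T0,
      Max {p v / lam e | v e. e \<in> E \<and> v \<in> e},
      T0)"

definition ps_continue :: "real \<Rightarrow> 'a ps_state \<Rightarrow> bool" where
  "ps_continue \<epsilon> s \<longleftrightarrow> fst (snd s) > (1 + \<epsilon>) * fst s"

definition ps_step :: "('a \<Rightarrow> real) \<Rightarrow> ('a set \<Rightarrow> real) \<Rightarrow> real \<Rightarrow> real \<Rightarrow>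
    (('a set \<Rightarrow> real) \<Rightarrow> ('a set \<times> 'a set set)) \<Rightarrow> 'a ps_state \<Rightarrow> 'a ps_state" where
  "ps_step p lam c \<epsilon> gw s =
     (case s of (\<alpha>, \<beta>, Ts) \<Rightarrow>
       if \<beta> > (1 + \<epsilon>) * \<alpha> then
         (let \<rho> = (\<alpha> + \<beta>) / 2; T = gw (\<lambda>e. \<rho> * lam e) in
          if c * tp p T \<le> \<rho> * tlen lam T then (\<alpha>, \<rho>, Ts)
          else (c * density p lam T, \<beta>, T))
       else s)"

end

theory Submission
  imports Defs
begin

text \<open>Throughout the search \<open>\<alpha> = c \<rho>(T\<^sup>s)\<close>, and \<open>\<beta>\<close> is an upper bound on the density
  of every rooted subtree. Initially this holds because in a tree each non-root vertex \<open>v\<close> can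
  be charged to the edge \<open>e\<close> towards its parent, and \<open>p\<^sub>v \<le> \<beta> \<lambda>\<^sub>e\<close>. When \<open>\<beta>\<close> is
  lowered to \<open>\<rho>\<close>, the GW output \<open>T\<close> satisfies \<open>c p(T) \<le> \<rho> \<lambda>(T)\<close>; comparing its
  guarantee with an arbitrary \<open>T'\<close>, the total prize \<open>p(V)\<close> cancels and leaves \<open>c (p(T') - \<rho> \<lambda>(T')) \<le> c p(T) - \<rho> \<lambda>(T) \<le> 0\<close>.
  On termination \<open>\<rho>\<^sup>\<star> \<le> \<beta> \<le> (1 + \<epsilon>) \<alpha> = (1 + \<epsilon>) c \<rho>(T\<^sup>s)\<close>.\<close>

lemma simple_graph_edges_subset_Pow:
  assumes "simple_graph V E"
  shows "E \<subseteq> Pow V"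
proof
  fix e assume "e \<in> E"
  then obtain u v where "e = {u, v}" "u \<in> V" "v \<in> V"
    using assms unfolding simple_graph_def by blast
  then show "e \<in> Pow V" by simp
qed

lemma simple_graph_finite:
  assumes "simple_graph V E"
  shows "finite V" and "finite E"
proof -
  show "finite V" using assms unfolding simple_graph_def by simp
  then show "finite E"
    using simple_graph_edges_subset_Pow[OF assms] by (meson finite_Pow_iff finite_subset)
qed

lemma connected_graph_parent:
  assumes G: "connected_graph V E" and r: "r \<in> V"
  obtains d :: "'a \<Rightarrow> nat" and parent where
    "\<forall>v\<in>V - {r}. {parent v, v} \<in> E \<and> d (parent v) < d v"
proof -
  define R where "R = adj_rel E"
  define d where "d v = (LEAST n. (r, v) \<in> R ^^ n)" for v
  have "\<forall>v\<in>V - {r}. \<exists>u. {u, v} \<in> E \<and> d u < d v"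
  proof
    fix v assume v: "v \<in> V - {r}"
    have "(r, v) \<in> R\<^sup>*" using G r v unfolding connected_graph_def R_def by simp
    then obtain n where "(r, v) \<in> R ^^ n" using rtrancl_power by blast
    then have dv: "(r, v) \<in> R ^^ d v" unfolding d_def by (rule LeastI)
    then obtain m where m: "d v = Suc m" using v by (cases "d v") auto
    with dv obtain u where u: "(r, u) \<in> R ^^ m" "(u, v) \<in> R" by auto
    have "d u \<le> m" unfolding d_def using u(1) by (rule Least_le)
    with u m show "\<exists>u. {u, v} \<in> E \<and> d u < d v" unfolding R_def adj_rel_def by auto
  qed
  from bchoice[OF this] obtain parent
    where "\<forall>v\<in>V - {r}. {parent v, v} \<in> E \<and> d (parent v) < d v" ..
  then show ?thesis by (rule that)
qed

text \<open>The bijection is \<open>v \<mapsto> {parent v, v}\<close>: injective since the distance to \<open>r\<close> drops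
  towards the parent, and onto since \<open>|E| = |V| - 1\<close>.\<close>

lemma tree_parent_edge_bij:
  assumes T: "is_tree V E" and r: "r \<in> V"
  obtains f where "bij_betw f (V - {r}) E" and "\<forall>v\<in>V - {r}. v \<in> f v"
proof -
  have G: "connected_graph V E" and card_E: "card E = card V - 1"
    using T unfolding is_tree_def by auto
  have finV: "finite V" and finE: "finite E"
    using G simple_graph_finite unfolding connected_graph_def by auto
  obtain d :: "'a \<Rightarrow> nat" and parent where
    parent: "\<forall>v\<in>V - {r}. {parent v, v} \<in> E \<and> d (parent v) < d v"
    using connected_graph_parent[OF G r] by blast
  define f where "f v = {parent v, v}" for v
  have inj: "inj_on f (V - {r})"
  proof (rule inj_onI)
    fix v w assume v: "v \<in> V - {r}" and w: "w \<in> V - {r}" and "f v = f w"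
    then have "v = w \<or> (v = parent w \<and> w = parent v)"
      unfolding f_def by (auto simp: doubleton_eq_iff)
    moreover have "d (parent v) < d v" "d (parent w) < d w" using parent v w by auto
    ultimately show "v = w" by (metis less_asym)
  qed
  have "f ` (V - {r}) \<subseteq> E" using parent unfolding f_def by auto
  moreover have "card (f ` (V - {r})) = card E"
    using card_image[OF inj] card_E finV r by simp
  ultimately have "f ` (V - {r}) = E" by (rule card_subset_eq[OF finE])
  with inj have "bij_betw f (V - {r}) E" unfolding bij_betw_def by blast
  moreover have "\<forall>v\<in>V - {r}. v \<in> f v" unfolding f_def by simp
  ultimately show ?thesis by (rule that)
qed

lemma tree_vertex_weight_le_edge_weight:
  fixes p :: "'a \<Rightarrow> real" and lam :: "'a set \<Rightarrow> real"
  assumes T: "is_tree V E" and r: "r \<in> V" and p_r: "p r = 0"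
    and bound: "\<forall>e\<in>E. \<forall>v\<in>e. p v \<le> \<beta> * lam e"
  shows "(\<Sum>v\<in>V. p v) \<le> \<beta> * (\<Sum>e\<in>E. lam e)"
proof -
  obtain f where f: "bij_betw f (V - {r}) E" and mem: "\<forall>v\<in>V - {r}. v \<in> f v"
    using tree_parent_edge_bij[OF T r] by blast
  have finV: "finite V"
    using T simple_graph_finite(1) unfolding is_tree_def connected_graph_def by blast
  have "(\<Sum>v\<in>V. p v) = (\<Sum>v\<in>V - {r}. p v)"
    using sum.remove[OF finV r, of p] p_r by simp
  also have "\<dots> \<le> (\<Sum>v\<in>V - {r}. \<beta> * lam (f v))"
    using bound mem bij_betwE[OF f] by (intro sum_mono) blast
  also have "\<dots> = (\<Sum>e\<in>E. \<beta> * lam e)"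
    using sum.reindex_bij_betw[OF f] .
  finally show ?thesis by (simp add: sum_distrib_left)
qed

lemma finite_rooted_subtrees:
  assumes "simple_graph V E"
  shows "finite (rooted_subtrees V E r)"
proof -
  have "rooted_subtrees V E r \<subseteq> Pow V \<times> Pow E"
    unfolding rooted_subtrees_def by auto
  with simple_graph_finite[OF assms] show ?thesis
    by (meson finite_Pow_iff finite_SigmaI finite_subset)
qed

lemma max_density_le:
  assumes G: "simple_graph V E"
    and T0: "T0 \<in> rooted_subtrees V E r" "tlen lam T0 > 0"
    and bound: "\<forall>T\<in>rooted_subtrees V E r. tp p T \<le> \<beta> * tlen lam T"
  shows "max_density V E r p lam \<le> \<beta>"
proof -
  let ?S = "{density p lam T | T. T \<in> rooted_subtrees V E r \<and> tlen lam T > 0}"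
  have "?S \<subseteq> density p lam ` rooted_subtrees V E r" by blast
  then have "finite ?S" using finite_rooted_subtrees[OF G] finite_surj by blast
  moreover have "?S \<noteq> {}" using T0 by blast
  moreover have "\<forall>x\<in>?S. x \<le> \<beta>" using bound by (auto simp: density_def divide_le_eq)
  ultimately show ?thesis unfolding max_density_def by simp
qed

locale parametric_search =
  fixes V :: "'a set" and E :: "'a set set" and r :: 'a
    and p :: "'a \<Rightarrow> real" and lam :: "'a set \<Rightarrow> real" and c :: real and \<epsilon> :: real
    and gw :: "('a set \<Rightarrow> real) \<Rightarrow> ('a set \<times> 'a set set)"
  assumes graph: "simple_graph V E"
    and p_nonneg: "\<forall>v\<in>V. 0 \<le> p v"
    and lam_pos: "\<forall>e\<in>E. 0 < lam e"
    and c_pos: "0 < c"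
    and eps_nonneg: "0 \<le> \<epsilon>"
    and gw: "gw_guarantee V E r p c gw"
begin

definition bounds_density :: "real \<Rightarrow> bool" where
  "bounds_density \<beta> \<longleftrightarrow> (\<forall>T\<in>rooted_subtrees V E r. tp p T \<le> \<beta> * tlen lam T)"

definition search_invariant :: "'a ps_state \<Rightarrow> bool" where
  "search_invariant s \<longleftrightarrow> (case s of (\<alpha>, \<beta>, Ts) \<Rightarrow>
     Ts \<in> rooted_subtrees V E r \<and> \<alpha> = c * density p lam Ts \<and> bounds_density \<beta>)"

lemma density_nonneg:
  assumes "T \<in> rooted_subtrees V E r"
  shows "0 \<le> density p lam T"
proof -
  have "fst T \<subseteq> V" "snd T \<subseteq> E" using assms unfolding rooted_subtrees_def by auto
  then show ?thesis
    using p_nonneg lam_pos unfolding density_def tp_def tlen_def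
    by (intro divide_nonneg_nonneg sum_nonneg) (auto intro: less_imp_le)
qed

lemma gw_rooted_subtree:
  assumes "0 < \<rho>"
  shows "gw (\<lambda>e. \<rho> * lam e) \<in> rooted_subtrees V E r"
  using gw lam_pos assms unfolding gw_guarantee_def by simp

lemma gw_certificate_bounds_density:
  assumes \<rho>: "0 < \<rho>"
    and cert: "c * tp p (gw (\<lambda>e. \<rho> * lam e)) \<le> \<rho> * tlen lam (gw (\<lambda>e. \<rho> * lam e))"
  shows "bounds_density \<rho>"
  unfolding bounds_density_def
proof
  fix T' assume T': "T' \<in> rooted_subtrees V E r"
  define T where "T = gw (\<lambda>e. \<rho> * lam e)"
  have T: "T \<in> rooted_subtrees V E r" using gw_rooted_subtree[OF \<rho>] unfolding T_def .
  have "tlen (\<lambda>e. \<rho> * lam e) T + c * (\<Sum>v\<in>V - fst T. p v)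
      \<le> c * (tlen (\<lambda>e. \<rho> * lam e) T' + (\<Sum>v\<in>V - fst T'. p v))"
    using gw lam_pos \<rho> T' unfolding gw_guarantee_def T_def by simp
  moreover have "(\<Sum>v\<in>V - fst X. p v) = (\<Sum>v\<in>V. p v) - tp p X"
    if "X \<in> rooted_subtrees V E r" for X
    using that simple_graph_finite[OF graph] by (auto simp: sum_diff tp_def rooted_subtrees_def)
  moreover have "tlen (\<lambda>e. \<rho> * lam e) X = \<rho> * tlen lam X" for X
    unfolding tlen_def by (simp add: sum_distrib_left)
  ultimately have "c * tp p T' \<le> c * (\<rho> * tlen lam T') + (c * tp p T - \<rho> * tlen lam T)"
    using T T' by (simp add: algebra_simps)
  also have "\<dots> \<le> c * (\<rho> * tlen lam T')" using cert unfolding T_def by simp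
  finally show "tp p T' \<le> \<rho> * tlen lam T'" using c_pos by simp
qed

lemma search_invariant_init:
  assumes p_r: "p r = 0" and T0: "T0 \<in> rooted_subtrees V E r"
  shows "search_invariant (ps_init E p lam c T0)"
proof -
  let ?B = "{p v / lam e | v e. e \<in> E \<and> v \<in> e}"
  have "?B \<subseteq> (\<lambda>(v, e). p v / lam e) ` (V \<times> E)"
    using simple_graph_edges_subset_Pow[OF graph]
    by (auto intro!: rev_image_eqI[of "(v, e)" for v e])
  with simple_graph_finite[OF graph] have "finite ?B"
    by (meson finite_SigmaI finite_imageI finite_subset)
  have bound: "p v \<le> Max ?B * lam e" if "e \<in> E" "v \<in> e" for e v
  proof -
    have "p v / lam e \<le> Max ?B" using \<open>finite ?B\<close> that by (intro Max_ge) auto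
    then show ?thesis using lam_pos that by (simp add: divide_le_eq)
  qed
  have "bounds_density (Max ?B)"
    unfolding bounds_density_def
  proof
    fix T assume "T \<in> rooted_subtrees V E r"
    then obtain VT ET where T: "T = (VT, ET)" "is_tree VT ET" "r \<in> VT" "ET \<subseteq> E"
      unfolding rooted_subtrees_def by auto
    have "(\<Sum>v\<in>VT. p v) \<le> Max ?B * (\<Sum>e\<in>ET. lam e)"
      using T(4) bound by (intro tree_vertex_weight_le_edge_weight[of VT ET r p, OF T(2,3) p_r]) auto
    then show "tp p T \<le> Max ?B * tlen lam T" unfolding T(1) tp_def tlen_def by simp
  qed
  then show ?thesis using T0 unfolding search_invariant_def ps_init_def density_def by simp
qed

lemma search_invariant_step:
  assumes "search_invariant s"
  shows "search_invariant (ps_step p lam c \<epsilon> gw s)"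
proof -
  obtain \<alpha> \<beta> Ts where s: "s = (\<alpha>, \<beta>, Ts)" by (cases s)
  have Ts: "Ts \<in> rooted_subtrees V E r" and \<alpha>: "\<alpha> = c * density p lam Ts"
    using assms unfolding s search_invariant_def by auto
  show ?thesis
  proof (cases "(1 + \<epsilon>) * \<alpha> < \<beta>")
    case False
    then show ?thesis using assms by (simp add: s ps_step_def)
  next
    case True
    define \<rho> where "\<rho> = (\<alpha> + \<beta>) / 2"
    define T where "T = gw (\<lambda>e. \<rho> * lam e)"
    have "0 \<le> \<alpha>" using \<alpha> c_pos density_nonneg[OF Ts] by simp
    moreover have "0 < \<beta>"
    proof -
      have "0 \<le> (1 + \<epsilon>) * \<alpha>" using \<open>0 \<le> \<alpha>\<close> eps_nonneg by simp
      from this True show ?thesis by (rule le_less_trans)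
    qed
    ultimately have \<rho>: "0 < \<rho>" unfolding \<rho>_def by simp
    have "ps_step p lam c \<epsilon> gw s = (if c * tp p T \<le> \<rho> * tlen lam T
        then (\<alpha>, \<rho>, Ts) else (c * density p lam T, \<beta>, T))"
      using True by (simp add: s ps_step_def \<rho>_def T_def Let_def)
    then show ?thesis
      using assms gw_certificate_bounds_density[OF \<rho>] gw_rooted_subtree[OF \<rho>]
      unfolding s search_invariant_def T_def by auto
  qed
qed

lemma search_invariant_funpow:
  "search_invariant s \<Longrightarrow> search_invariant ((ps_step p lam c \<epsilon> gw ^^ k) s)"
  by (induction k) (simp_all add: search_invariant_step)

lemma max_density_le_when_stopped:
  assumes inv: "search_invariant s" and stop: "\<not> ps_continue \<epsilon> s"
    and T0: "T0 \<in> rooted_subtrees V E r" "0 < tlen lam T0"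
  shows "max_density V E r p lam \<le> (1 + \<epsilon>) * c * density p lam (snd (snd s))"
proof -
  obtain \<alpha> \<beta> Ts where s: "s = (\<alpha>, \<beta>, Ts)" by (cases s)
  have \<beta>: "bounds_density \<beta>" and \<alpha>: "\<alpha> = c * density p lam Ts"
    using inv unfolding s search_invariant_def by auto
  have "max_density V E r p lam \<le> \<beta>"
    using max_density_le[OF graph T0] \<beta> unfolding bounds_density_def by blast
  also have "\<beta> \<le> (1 + \<epsilon>) * \<alpha>" using stop unfolding s ps_continue_def by simp
  finally show ?thesis using \<alpha> by (simp add: s mult.assoc)
qed

end

theorem proposition1:
  fixes V :: "'a set" and E :: "'a set set" and r :: 'a
    and p :: "'a \<Rightarrow> real" and lam :: "'a set \<Rightarrow> real" and \<epsilon> :: real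
    and gw :: "('a set \<Rightarrow> real) \<Rightarrow> ('a set \<times> 'a set set)"
    and T0 :: "'a set \<times> 'a set set" and k :: nat
  defines "n \<equiv> card (V - {r})"
  defines "c \<equiv> 2 - 1 / real n"
  assumes G: "connected_graph V E" and rV: "r \<in> V"
    and p_range: "\<forall>v\<in>V. 0 \<le> p v \<and> p v \<le> 1"
    and p_root: "p r = 0"
    and p_sum: "(\<Sum>v\<in>V. p v) = 1"
    and lam_pos: "\<forall>e\<in>E. lam e > 0"
    and eps: "\<epsilon> > 0"
    and GW: "gw_guarantee V E r p c gw"
    and T0: "T0 \<in> rooted_subtrees V E r" "tlen lam T0 > 0"
    and stop: "\<not> ps_continue \<epsilon> ((ps_step p lam c \<epsilon> gw ^^ k) (ps_init E p lam c T0))"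
  shows "max_density V E r p lam
           \<le> (1 + \<epsilon>) * c * density p lam (snd (snd ((ps_step p lam c \<epsilon> gw ^^ k) (ps_init E p lam c T0))))"
proof -
  have "1 / real n \<le> 1" by (cases n) simp_all
  then have "0 < c" unfolding c_def by simp
  then interpret parametric_search V E r p lam c \<epsilon> gw
    using G p_range lam_pos eps GW unfolding connected_graph_def by unfold_locales auto
  show ?thesis
    using max_density_le_when_stopped[OF
        search_invariant_funpow[OF search_invariant_init[OF p_root T0(1)]] stop T0] .
qed

end
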